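(* Let $n$ be divisible by $4$, $m=n/4$, let $(\Pi_0,\Pi_1)$ be a neat, ordered, balanced partition of $Z$, and let $R=S\times T$ be a $(\Pi_0,\Pi_1)$-rectangle. Then \[ \big||R\cap A|-|R\cap B|\big|\le 2^{10m/3}. \]
   Context: $X=\{x_1,\dots,x_n\}$, $Y=\{y_1,\dots,y_n\}$, $Z=X\cup Y$, $z_i=x_i$ ($i\in[n]$), $z_i=y_{i-n}$ ($i\in[n+1,2n]$), $Z[i,j]=\{z_\ell:i\le\ell\le j\}$. A partition $(\Pi_0,\Pi_1)$ of $Z$ is ordered if $\Pi_\ell=Z[i,j]$ for some interval $[i,j]$ and some $\ell\in\{0,1\}$; balanced if $2n/3\le|\Pi_0|,|\Pi_1|\le 4n/3$. A $(\Pi_0,\Pi_1)$-rectangle is $S\times T=\{U\cup V:U\in S,V\in T\}$ with $S\subseteq\mathcal{P}(\Pi_0)$, $T\subseteq\mathcal{P}(\Pi_1)$. Intervals $I_k=Z[4(k-1)+1,4k]$, $k\in[2m]$; neat means each $I_k\subseteq\Pi_0$ or $I_k\subseteq\Pi_1$. $\mathcal{L}=\{U\subseteq Z: |U\cap I_k|=1\ \forall k\in[2m]\}$. $A=\{U\in\mathcal{L}: |\{i\in[n]: x_i,y_i\in U\}| \text{ odd}\}$, $B=\mathcal{L}\setminus A$. *)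

theory Defs
  imports Complex_Main
begin

text \<open>Encoding: the ground set Z = X \<union> Y is represented by its indices {1..2n}:
  index i \<in> [1,n] stands for x_i = z_i, index i \<in> [n+1,2n] stands for y_(i-n) = z_i.\<close>

definition Zset :: "nat \<Rightarrow> nat set" where
  "Zset n = {1..2*n}"

definition Zint :: "nat \<Rightarrow> nat \<Rightarrow> nat \<Rightarrow> nat set" where
  "Zint n i j = {l \<in> Zset n. i \<le> l \<and> l \<le> j}"

definition is_partition :: "nat \<Rightarrow> nat set \<Rightarrow> nat set \<Rightarrow> bool" where
  "is_partition n P0 P1 \<longleftrightarrow> P0 \<union> P1 = Zset n \<and> P0 \<inter> P1 = {}"

definition ordered_partition :: "nat \<Rightarrow> nat set \<Rightarrow> nat set \<Rightarrow> bool" where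
  "ordered_partition n P0 P1 \<longleftrightarrow> is_partition n P0 P1 \<and>
     (\<exists>i j. P0 = Zint n i j \<or> P1 = Zint n i j)"

definition balanced_partition :: "nat \<Rightarrow> nat set \<Rightarrow> nat set \<Rightarrow> bool" where
  "balanced_partition n P0 P1 \<longleftrightarrow> is_partition n P0 P1 \<and>
     2 * real n / 3 \<le> real (card P0) \<and> real (card P0) \<le> 4 * real n / 3 \<and>
     2 * real n / 3 \<le> real (card P1) \<and> real (card P1) \<le> 4 * real n / 3"

definition Iblock :: "nat \<Rightarrow> nat \<Rightarrow> nat set" where
  "Iblock n k = Zint n (4*(k-1)+1) (4*k)"

definition neat_partition :: "nat \<Rightarrow> nat \<Rightarrow> nat set \<Rightarrow> nat set \<Rightarrow> bool" where
  "neat_partition n m P0 P1 \<longleftrightarrow> is_partition n P0 P1 \<and>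
     (\<forall>k\<in>{1..2*m}. Iblock n k \<subseteq> P0 \<or> Iblock n k \<subseteq> P1)"

definition rectangle :: "nat set \<Rightarrow> nat set \<Rightarrow> nat set set \<Rightarrow> bool" where
  "rectangle P0 P1 R \<longleftrightarrow> (\<exists>S T. S \<subseteq> Pow P0 \<and> T \<subseteq> Pow P1 \<and>
     R = {U \<union> V | U V. U \<in> S \<and> V \<in> T})"

definition Lset :: "nat \<Rightarrow> nat \<Rightarrow> nat set set" where
  "Lset n m = {U. U \<subseteq> Zset n \<and> (\<forall>k\<in>{1..2*m}. card (U \<inter> Iblock n k) = 1)}"

definition Aset :: "nat \<Rightarrow> nat \<Rightarrow> nat set set" where
  "Aset n m = {U \<in> Lset n m. odd (card {i \<in> {1..n}. i \<in> U \<and> n + i \<in> U})}"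

definition Bset :: "nat \<Rightarrow> nat \<Rightarrow> nat set set" where
  "Bset n m = Lset n m - Aset n m"

end

theory Submission
  imports Defs "HOL-Analysis.Convex" "HOL-Library.FuncSet"
begin

text \<open>Every U in L picks one element from each block, so by neatness R \<inter> L is in bijection with
  G \<times> H, where G and H consist of choice functions on the blocks of \<Pi>_0 and of \<Pi>_1, and
  |R \<inter> A| - |R \<inter> B| is minus the sum over (g, h) of (-1)^(number of pairs x_i, y_i chosen).
  The pairs x_i, y_i with x_i in block k lie in the blocks k and k + m; call k split if these two
  blocks lie on different sides of the partition, and let s be the number of split k.
  By Cauchy-Schwarz the square of the sum is at most |G| times the sum over all g of the squared
  inner sums. Expanding, the correlation of two choices h, h' on \<Pi>_1 vanishes as soon as they differ
  on the \<Pi>_1-block of a split pair: summing over the partner block in \<Pi>_0 then balances the signs.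
  This gives the bound 2^(4m - s). Finally s \<ge> 2m/3 for an ordered balanced partition, since a set
  of block indices forming an interval, or the complement of one, of size between 2m/3 and 4m/3
  meets at least 2m/3 of the pairs {k, k + m} in exactly one element.\<close>

lemma sum_two_sign_flips_eq_zero:
  fixes A :: "'a set"
  assumes "finite A" "x \<in> A" "y \<in> A" "x \<noteq> y" "card A = 4"
  shows "(\<Sum>a\<in>A. (if a = x then -1 else 1) * (if a = y then -1 else (1::real))) = 0"
proof -
  let ?f = "\<lambda>a. (if a = x then -1 else 1) * (if a = y then -1 else (1::real))"
  have "sum ?f A = ?f x + sum ?f (A - {x})"
    using assms by (simp add: sum.remove)
  moreover have "sum ?f (A - {x}) = ?f y + sum ?f (A - {x} - {y})"
    using assms by (intro sum.remove) auto
  moreover have "sum ?f (A - {x} - {y}) = sum (\<lambda>a. 1) (A - {x} - {y})"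
    by (intro sum.cong) auto
  moreover have "card (A - {x} - {y}) = 2"
    using assms by (simp add: card_Diff_subset)
  ultimately show ?thesis using assms by simp
qed

definition split_indices :: "nat \<Rightarrow> nat set \<Rightarrow> nat set" where
  "split_indices m K = {k\<in>{1..m}. (k \<in> K) \<noteq> (k + m \<in> K)}"

lemma split_indices_complement:
  "K \<subseteq> {1..2*m} \<Longrightarrow> split_indices m ({1..2*m} - K) = split_indices m K"
  unfolding split_indices_def by auto

lemma card_le_split_indices:
  assumes K: "K \<subseteq> {1..2*m}" and no_pair: "\<And>x. x \<in> K \<Longrightarrow> x + m \<notin> K"
  shows "card K \<le> card (split_indices m K)"
proof -
  define r where "r k = (if k \<le> m then k else k - m)" for k
  have "inj_on r K"
  proof (rule inj_onI, rule ccontr)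
    fix a b assume "a \<in> K" "b \<in> K" "r a = r b" "a \<noteq> b"
    then have "a = b + m \<or> b = a + m" unfolding r_def by (auto split: if_splits)
    then show False using no_pair \<open>a \<in> K\<close> \<open>b \<in> K\<close> by auto
  qed
  moreover have "r ` K \<subseteq> split_indices m K"
  proof
    fix y assume "y \<in> r ` K"
    then obtain k where k: "k \<in> K" "y = r k" by auto
    have "1 \<le> k" "k \<le> 2*m" using K k by auto
    moreover have "k - m \<notin> K" if "\<not> k \<le> m"
      using no_pair[of "k - m"] k that by auto
    ultimately show "y \<in> split_indices m K"
      using k no_pair[OF k(1)] unfolding r_def split_indices_def by auto
  qed
  moreover have "finite (split_indices m K)" unfolding split_indices_def by auto
  ultimately show ?thesis by (metis card_image card_mono)
qed

lemma card_split_indices_ge: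
  fixes K :: "nat set"
  assumes K: "K \<subseteq> {1..2*m}"
    and convex: "\<And>x y z. x \<in> K \<Longrightarrow> y \<in> K \<Longrightarrow> x \<le> z \<Longrightarrow> z \<le> y \<Longrightarrow> z \<in> K"
    and lower: "2 * real m / 3 \<le> card K" and upper: "card K \<le> 4 * real m / 3"
  shows "2 * real m / 3 \<le> card (split_indices m K)"
proof (cases "card K \<le> m")
  case True
  have "x + m \<notin> K" if x: "x \<in> K" for x
  proof
    assume "x + m \<in> K"
    then have "{x..x+m} \<subseteq> K" using convex[OF x] by auto
    then have "card {x..x+m} \<le> card K" using K by (intro card_mono) (auto intro: finite_subset)
    then show False using True by simp
  qed
  then show ?thesis using card_le_split_indices[OF K] lower by fastforce
next
  case False
  define K' where "K' = {1..2*m} - K"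
  have card_K': "card K' = 2*m - card K"
    unfolding K'_def using K by (simp add: card_Diff_subset finite_subset)
  txt \<open>An interval avoiding x and x + m fits into one of the three gaps they leave, each of
    size less than m.\<close>
  have "x + m \<notin> K'" if x: "x \<in> K'" for x
  proof
    assume xm: "x + m \<in> K'"
    have x_range: "1 \<le> x" "x + m \<le> 2*m" "x \<notin> K" "x + m \<notin> K"
      using x xm unfolding K'_def by auto
    have side: "(\<forall>k\<in>K. k < w) \<or> (\<forall>k\<in>K. w < k)" if "w \<notin> K" for w
      using convex[of _ _ w] that by (metis not_less)
    have "K \<subseteq> {1..<x} \<or> K \<subseteq> {x<..<x+m} \<or> K \<subseteq> {x+m<..2*m}"
      using side[OF x_range(3)] side[OF x_range(4)] K by auto
    moreover have "card {1..<x} < m" "card {x<..<x+m} < m" "card {x+m<..2*m} < m"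
      using x_range by auto
    ultimately have "card K < m"
      by (metis card_mono finite_atLeastLessThan finite_greaterThanAtMost
          finite_greaterThanLessThan le_less_trans)
    then show False using False by simp
  qed
  then have "card K' \<le> card (split_indices m K')"
    using card_le_split_indices[of K' m] unfolding K'_def by blast
  then have "2*m - card K \<le> card (split_indices m K)"
    using split_indices_complement[OF K] card_K' unfolding K'_def by simp
  moreover have "card K \<le> 2*m" using card_mono[OF _ K] by simp
  ultimately show ?thesis using upper by linarith
qed

lemma finite_Lset: "finite (Lset n m)"
  by (rule finite_subset[of _ "Pow (Zset n)"]) (auto simp: Lset_def Zset_def)

lemma card_Aset_minus_card_Bset:
  "real (card (R \<inter> Aset n m)) - real (card (R \<inter> Bset n m))
    = - (\<Sum>W\<in>R \<inter> Lset n m. (-1::real) ^ card {i\<in>{1..n}. i \<in> W \<and> n + i \<in> W})"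
proof -
  let ?pairs = "\<lambda>W. card {i\<in>{1..n}. i \<in> W \<and> n + i \<in> W}"
  have fin: "finite (R \<inter> Lset n m)" using finite_Lset by blast
  have "R \<inter> Aset n m = {W\<in>R \<inter> Lset n m. odd (?pairs W)}"
    "R \<inter> Bset n m = {W\<in>R \<inter> Lset n m. even (?pairs W)}"
    unfolding Aset_def Bset_def by auto
  then have "real (card (R \<inter> Aset n m)) - real (card (R \<inter> Bset n m))
      = (\<Sum>W\<in>R \<inter> Lset n m. (if odd (?pairs W) then 1 else 0) - (if even (?pairs W) then 1 else 0))"
    using fin by (simp add: sum.If_cases sum_subtractf Int_def)
  also have "\<dots> = (\<Sum>W\<in>R \<inter> Lset n m. - ((-1) ^ ?pairs W))"
    by (intro sum.cong refl) auto
  also have "\<dots> = - (\<Sum>W\<in>R \<inter> Lset n m. (-1) ^ ?pairs W)"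
    by (simp add: sum_negf)
  finally show ?thesis .
qed

locale four_blocks =
  fixes n m :: nat
  assumes n_eq: "n = 4*m"
begin

definition block_of :: "nat \<Rightarrow> nat" where
  "block_of l = (l + 3) div 4"

abbreviation choice_functions :: "(nat \<Rightarrow> nat) set" where
  "choice_functions \<equiv> PiE {1..2*m} (Iblock n)"

text \<open>x_i = z_i lies in a block k \<le> m and y_i = z_(n+i) in block k + m, so a set f ` {1..2m}
  contains the pair x_i, y_i with x_i in block k iff f (k + m) = f k + n.\<close>

definition matched_pairs :: "(nat \<Rightarrow> nat) \<Rightarrow> nat" where
  "matched_pairs f = card {k\<in>{1..m}. f (k + m) = f k + n}"

lemma Iblock_eq: "k \<in> {1..2*m} \<Longrightarrow> Iblock n k = {4*k-3..4*k}"
  unfolding Iblock_def Zint_def Zset_def using n_eq by auto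

lemma mem_Iblock_iff: "k \<in> {1..2*m} \<Longrightarrow> l \<in> Iblock n k \<longleftrightarrow> l \<in> Zset n \<and> block_of l = k"
  unfolding Iblock_eq block_of_def Zset_def using n_eq by auto

lemma card_Iblock: "k \<in> {1..2*m} \<Longrightarrow> card (Iblock n k) = 4"
  unfolding Iblock_eq by auto

lemma finite_Iblock: "finite (Iblock n k)"
  unfolding Iblock_def Zint_def Zset_def by auto

lemma Iblock_subset_Zset: "Iblock n k \<subseteq> Zset n"
  unfolding Iblock_def Zint_def by auto

lemma last_in_Iblock: "k \<in> {1..2*m} \<Longrightarrow> 4*k \<in> Iblock n k"
  unfolding Iblock_eq by auto

lemma mem_Iblock_block_of: "l \<in> Zset n \<Longrightarrow> block_of l \<in> {1..2*m} \<and> l \<in> Iblock n (block_of l)"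
proof -
  assume l: "l \<in> Zset n"
  then have "block_of l \<in> {1..2*m}" using n_eq unfolding Zset_def block_of_def by auto
  then show ?thesis using mem_Iblock_iff l by auto
qed

lemma block_of_add_n: "block_of (n + i) = block_of i + m"
  unfolding block_of_def n_eq by auto

lemma Iblock_disjoint: "i \<in> {1..2*m} \<Longrightarrow> j \<in> {1..2*m} \<Longrightarrow> i \<noteq> j \<Longrightarrow> Iblock n i \<inter> Iblock n j = {}"
proof (rule ccontr)
  assume "i \<in> {1..2*m}" "j \<in> {1..2*m}" "i \<noteq> j" "Iblock n i \<inter> Iblock n j \<noteq> {}"
  then obtain x where "x \<in> Iblock n i" "x \<in> Iblock n j" "block_of x = i" "block_of x = j"
    using mem_Iblock_iff by blast
  then show False using \<open>i \<noteq> j\<close> by simp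
qed

lemma card_UN_Iblock: "K \<subseteq> {1..2*m} \<Longrightarrow> card (\<Union>k\<in>K. Iblock n k) = 4 * card K"
proof -
  assume K: "K \<subseteq> {1..2*m}"
  have "card (\<Union>k\<in>K. Iblock n k) = (\<Sum>k\<in>K. card (Iblock n k))"
  proof (rule card_UN_disjoint)
    show "finite K" using K finite_subset by blast
    show "\<forall>k\<in>K. finite (Iblock n k)" using finite_Iblock by blast
    show "\<forall>i\<in>K. \<forall>j\<in>K. i \<noteq> j \<longrightarrow> Iblock n i \<inter> Iblock n j = {}"
      using K by (intro ballI impI Iblock_disjoint) auto
  qed
  also have "\<dots> = (\<Sum>k\<in>K. 4)" using K card_Iblock by (intro sum.cong) auto
  finally show ?thesis by simp
qed

lemma card_PiE_Iblock: "K \<subseteq> {1..2*m} \<Longrightarrow> card (PiE K (Iblock n)) = 4 ^ card K"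
proof -
  assume K: "K \<subseteq> {1..2*m}"
  then have "card (PiE K (Iblock n)) = (\<Prod>k\<in>K. card (Iblock n k))"
    by (intro card_PiE) (auto intro: finite_subset)
  also have "\<dots> = (\<Prod>k\<in>K. 4)" using K card_Iblock by (intro prod.cong) auto
  finally show ?thesis by simp
qed

lemma choice_function_block_of:
  "f \<in> choice_functions \<Longrightarrow> k \<in> {1..2*m} \<Longrightarrow> block_of (f k) = k \<and> f k \<in> Zset n"
  using mem_Iblock_iff[of k "f k"] by auto

lemma image_choice_function_Int_Iblock:
  assumes f: "f \<in> choice_functions" and k: "k \<in> {1..2*m}"
  shows "f ` {1..2*m} \<inter> Iblock n k = {f k}"
proof -
  have "x = f k" if x: "x \<in> f ` {1..2*m}" "x \<in> Iblock n k" for x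
  proof -
    obtain k' where k': "k' \<in> {1..2*m}" "x = f k'" using x(1) by blast
    then have "block_of x = k'" using choice_function_block_of[OF f] by auto
    moreover have "block_of x = k" using mem_Iblock_iff[OF k] x(2) by auto
    ultimately show ?thesis using k' by auto
  qed
  moreover have "f k \<in> Iblock n k" using f k by auto
  ultimately show ?thesis using k by auto
qed

lemma image_choice_function_in_Lset: "f \<in> choice_functions \<Longrightarrow> f ` {1..2*m} \<in> Lset n m"
  unfolding Lset_def using image_choice_function_Int_Iblock choice_function_block_of by auto

lemma inj_on_image_choice_functions: "inj_on (\<lambda>f. f ` {1..2*m}) choice_functions"
proof (rule inj_onI)
  fix f g assume f: "f \<in> choice_functions" and g: "g \<in> choice_functions"
    and eq: "f ` {1..2*m} = g ` {1..2*m}"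
  show "f = g"
  proof (rule PiE_ext[OF f g])
    fix k assume k: "k \<in> {1..2*m}"
    show "f k = g k"
      using image_choice_function_Int_Iblock[OF f k] image_choice_function_Int_Iblock[OF g k] eq
      by auto
  qed
qed

lemma Lset_eq_image_choice_function:
  assumes W: "W \<in> Lset n m"
  obtains f where "f \<in> choice_functions" "W = f ` {1..2*m}"
proof -
  define f where "f = (\<lambda>k\<in>{1..2*m}. THE x. x \<in> W \<inter> Iblock n k)"
  have f_k: "W \<inter> Iblock n k = {f k}" if k: "k \<in> {1..2*m}" for k
  proof -
    have "card (W \<inter> Iblock n k) = 1" using W k unfolding Lset_def by auto
    then obtain x where x: "W \<inter> Iblock n k = {x}" by (auto simp: card_1_singleton_iff)
    moreover have "f k = x" unfolding f_def using k x by auto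
    ultimately show ?thesis by simp
  qed
  have "f k \<in> Iblock n k" if "k \<in> {1..2*m}" for k using f_k[OF that] by blast
  then have "f \<in> choice_functions" unfolding f_def by auto
  moreover have "W = f ` {1..2*m}"
  proof
    show "f ` {1..2*m} \<subseteq> W" using f_k by blast
    show "W \<subseteq> f ` {1..2*m}"
    proof
      fix x assume x: "x \<in> W"
      then have "x \<in> Zset n" using W unfolding Lset_def by auto
      then show "x \<in> f ` {1..2*m}" using mem_Iblock_block_of f_k x by blast
    qed
  qed
  ultimately show thesis by (rule that)
qed

lemma card_pairs_image_choice_function:
  assumes f: "f \<in> choice_functions"
  shows "card {i\<in>{1..n}. i \<in> f ` {1..2*m} \<and> n + i \<in> f ` {1..2*m}} = matched_pairs f"
proof -
  have inj: "inj_on f {1..2*m}" using choice_function_block_of[OF f] by (metis inj_onI)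
  have "{i\<in>{1..n}. i \<in> f ` {1..2*m} \<and> n + i \<in> f ` {1..2*m}} = f ` {k\<in>{1..m}. f (k + m) = f k + n}"
  proof
    show "f ` {k\<in>{1..m}. f (k + m) = f k + n} \<subseteq> {i\<in>{1..n}. i \<in> f ` {1..2*m} \<and> n + i \<in> f ` {1..2*m}}"
    proof
      fix i assume "i \<in> f ` {k\<in>{1..m}. f (k + m) = f k + n}"
      then obtain k where k: "k \<in> {1..m}" "f (k + m) = f k + n" "i = f k" by auto
      then have "f k \<in> {4*k-3..4*k}" using PiE_mem[OF f] Iblock_eq[of k] by auto
      then have "i \<in> {1..n}" using k n_eq by auto
      moreover have "i \<in> f ` {1..2*m}" "n + i \<in> f ` {1..2*m}"
        using k by (auto intro!: image_eqI[of _ _ "k + m"])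
      ultimately show "i \<in> {i\<in>{1..n}. i \<in> f ` {1..2*m} \<and> n + i \<in> f ` {1..2*m}}" by auto
    qed
    show "{i\<in>{1..n}. i \<in> f ` {1..2*m} \<and> n + i \<in> f ` {1..2*m}} \<subseteq> f ` {k\<in>{1..m}. f (k + m) = f k + n}"
    proof
      fix i assume i: "i \<in> {i\<in>{1..n}. i \<in> f ` {1..2*m} \<and> n + i \<in> f ` {1..2*m}}"
      then obtain k k' where k: "k \<in> {1..2*m}" "i = f k" and k': "k' \<in> {1..2*m}" "n + i = f k'"
        by auto
      have "block_of i = k" using choice_function_block_of[OF f k(1)] k by auto
      moreover have "block_of (n + i) = k'" using choice_function_block_of[OF f k'(1)] k' by auto
      ultimately have "k' = k + m" using block_of_add_n by auto
      moreover have "k \<le> m" using \<open>block_of i = k\<close> i n_eq unfolding block_of_def by auto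
      ultimately show "i \<in> f ` {k\<in>{1..m}. f (k + m) = f k + n}" using k k' by auto
    qed
  qed
  moreover have "inj_on f {k\<in>{1..m}. f (k + m) = f k + n}" by (rule inj_on_subset[OF inj]) auto
  ultimately show ?thesis unfolding matched_pairs_def by (simp add: card_image)
qed

lemma add_n_mem_Iblock_iff: "k \<in> {1..m} \<Longrightarrow> c + n \<in> Iblock n (k + m) \<longleftrightarrow> c \<in> Iblock n k"
  using Iblock_eq[of k] Iblock_eq[of "k + m"] n_eq by auto

lemma interval_block_indices_convex:
  assumes "x \<in> {k\<in>{1..2*m}. Iblock n k \<subseteq> Zint n i j}" "y \<in> {k\<in>{1..2*m}. Iblock n k \<subseteq> Zint n i j}"
    and "x \<le> z" "z \<le> y"
  shows "z \<in> {k\<in>{1..2*m}. Iblock n k \<subseteq> Zint n i j}"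
proof -
  have "4*x-3 \<in> Zint n i j" "4*y \<in> Zint n i j"
    using assms(1,2) Iblock_eq[of x] Iblock_eq[of y] by auto
  then have "i \<le> 4*x-3" "4*y \<le> j" unfolding Zint_def by auto
  have z: "z \<in> {1..2*m}" using assms by auto
  then have "Iblock n z \<subseteq> Zint n i j"
    using \<open>i \<le> 4*x-3\<close> \<open>4*y \<le> j\<close> assms(3,4) Iblock_subset_Zset[of z] Iblock_eq[OF z]
    unfolding Zint_def by auto
  then show ?thesis using z by simp
qed

end

locale neat_split = four_blocks +
  fixes P0 P1 :: "nat set"
  assumes P0_Un_P1: "P0 \<union> P1 = Zset n" and P0_Int_P1: "P0 \<inter> P1 = {}"
    and neat: "\<forall>k\<in>{1..2*m}. Iblock n k \<subseteq> P0 \<or> Iblock n k \<subseteq> P1"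
begin

definition K0 :: "nat set" where "K0 = {k\<in>{1..2*m}. Iblock n k \<subseteq> P0}"
definition K1 :: "nat set" where "K1 = {k\<in>{1..2*m}. Iblock n k \<subseteq> P1}"

lemma mem_P0_P1_iff:
  assumes k: "k \<in> {1..2*m}" and l: "l \<in> Iblock n k"
  shows "(l \<in> P0 \<longleftrightarrow> k \<in> K0) \<and> (l \<in> P1 \<longleftrightarrow> k \<in> K1)"
  using neat k l P0_Int_P1 unfolding K0_def K1_def by blast

lemma K0_subset: "K0 \<subseteq> {1..2*m}" and K1_subset: "K1 \<subseteq> {1..2*m}"
  unfolding K0_def K1_def by auto

lemma finite_K0: "finite K0" and finite_K1: "finite K1"
  using K0_subset K1_subset finite_subset by auto

lemma K1_eq: "K1 = {1..2*m} - K0"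
proof -
  have "k \<in> K1 \<longleftrightarrow> k \<notin> K0" if k: "k \<in> {1..2*m}" for k
  proof -
    have "4*k \<in> Zset n" using Iblock_subset_Zset last_in_Iblock[OF k] by blast
    then show ?thesis using mem_P0_P1_iff[OF k last_in_Iblock[OF k]] P0_Un_P1 P0_Int_P1 by blast
  qed
  then show ?thesis using K1_subset by blast
qed

lemma P0_eq: "P0 = (\<Union>k\<in>K0. Iblock n k)"
proof
  show "(\<Union>k\<in>K0. Iblock n k) \<subseteq> P0" unfolding K0_def by auto
  show "P0 \<subseteq> (\<Union>k\<in>K0. Iblock n k)"
  proof
    fix l assume l: "l \<in> P0"
    then have "l \<in> Zset n" using P0_Un_P1 by auto
    then show "l \<in> (\<Union>k\<in>K0. Iblock n k)" using mem_Iblock_block_of mem_P0_P1_iff l by blast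
  qed
qed

lemma card_P0: "card P0 = 4 * card K0"
  using card_UN_Iblock[OF K0_subset] P0_eq by simp

lemma card_K0_add_card_K1: "card K0 + card K1 = 2*m"
  using K0_subset card_mono[OF _ K0_subset] unfolding K1_eq by (simp add: card_Diff_subset finite_K0)

abbreviation choices0 :: "(nat \<Rightarrow> nat) set" where "choices0 \<equiv> PiE K0 (Iblock n)"
abbreviation choices1 :: "(nat \<Rightarrow> nat) set" where "choices1 \<equiv> PiE K1 (Iblock n)"

lemma finite_choices0: "finite choices0" and finite_choices1: "finite choices1"
  using finite_K0 finite_K1 finite_Iblock by (auto intro: finite_PiE)

definition glue :: "(nat \<Rightarrow> nat) \<Rightarrow> (nat \<Rightarrow> nat) \<Rightarrow> nat \<Rightarrow> nat" where
  "glue g h = (\<lambda>k. if k \<in> K0 then g k else h k)"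

lemma glue_in_choice_functions:
  assumes g: "g \<in> choices0" and h: "h \<in> choices1"
  shows "glue g h \<in> choice_functions"
proof -
  have "glue g h k \<in> Iblock n k" if "k \<in> {1..2*m}" for k
    using that PiE_mem[OF g] PiE_mem[OF h] unfolding glue_def K1_eq by auto
  moreover have "glue g h k = undefined" if "k \<notin> {1..2*m}" for k
  proof -
    have "k \<notin> K0" "k \<notin> K1" using that K0_subset K1_subset by auto
    then show ?thesis using PiE_arb[OF h] unfolding glue_def by simp
  qed
  ultimately show ?thesis by (auto simp: PiE_iff extensional_def)
qed

lemma image_glue: "glue g h ` {1..2*m} = g ` K0 \<union> h ` K1"
  unfolding glue_def K1_eq using K0_subset by auto

lemma glue_fun_upd: "j \<in> K0 \<Longrightarrow> glue (g(j := a)) h = (glue g h)(j := a)"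
  unfolding glue_def by auto

lemma inj_on_glue: "inj_on (\<lambda>(g, h). glue g h) (choices0 \<times> choices1)"
proof (rule inj_onI, clarify)
  fix g h g' h' assume g: "g \<in> choices0" "g' \<in> choices0" and h: "h \<in> choices1" "h' \<in> choices1"
    and eq: "glue g h = glue g' h'"
  have "g i = g' i" if "i \<in> K0" for i using fun_cong[OF eq, of i] that unfolding glue_def by auto
  moreover have "h i = h' i" if "i \<in> K1" for i
    using fun_cong[OF eq, of i] that unfolding glue_def K1_eq by auto
  ultimately show "g = g' \<and> h = h'" using PiE_ext g h by metis
qed

lemma rectangle_Int_Lset_eq:
  assumes S: "S \<subseteq> Pow P0" and T: "T \<subseteq> Pow P1" and R: "R = {U \<union> V | U V. U \<in> S \<and> V \<in> T}"
  shows "R \<inter> Lset n m =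
    (\<lambda>(g, h). glue g h ` {1..2*m}) ` ({g\<in>choices0. g ` K0 \<in> S} \<times> {h\<in>choices1. h ` K1 \<in> T})"
    (is "_ = ?glued ` (?G \<times> ?H)")
proof
  show "?glued ` (?G \<times> ?H) \<subseteq> R \<inter> Lset n m"
  proof
    fix W assume "W \<in> ?glued ` (?G \<times> ?H)"
    then obtain g h where g: "g \<in> ?G" and h: "h \<in> ?H" and W: "W = glue g h ` {1..2*m}"
      by auto
    have "W \<in> Lset n m"
      unfolding W using g h by (intro image_choice_function_in_Lset glue_in_choice_functions) auto
    moreover have "W \<in> R" unfolding W image_glue R using g h by blast
    ultimately show "W \<in> R \<inter> Lset n m" by simp
  qed
  show "R \<inter> Lset n m \<subseteq> ?glued ` (?G \<times> ?H)"
  proof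
    fix W assume W: "W \<in> R \<inter> Lset n m"
    then obtain U V where UV: "W = U \<union> V" "U \<in> S" "V \<in> T" using R by blast
    obtain f where f: "f \<in> choice_functions" "W = f ` {1..2*m}"
      using Lset_eq_image_choice_function W by blast
    have side: "f k \<in> P0 \<longleftrightarrow> k \<in> K0" "f k \<in> P1 \<longleftrightarrow> k \<in> K1" if "k \<in> {1..2*m}" for k
      using mem_P0_P1_iff[OF that PiE_mem[OF f(1) that]] by auto
    have "U \<subseteq> P0" "V \<subseteq> P1" using UV S T by auto
    then have "U = W \<inter> P0" "V = W \<inter> P1" using P0_Int_P1 UV(1) by blast+
    moreover have "W \<inter> P0 = f ` K0" "W \<inter> P1 = f ` K1"
      unfolding f(2) using side K0_subset K1_subset by blast+
    ultimately have "U = f ` K0" "V = f ` K1" by simp_all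
    then have "restrict f K0 \<in> ?G" "restrict f K1 \<in> ?H"
      using f(1) K0_subset K1_subset UV by auto
    moreover have "glue (restrict f K0) (restrict f K1) = f"
    proof (rule PiE_ext[OF glue_in_choice_functions f(1)])
      show "restrict f K0 \<in> choices0" "restrict f K1 \<in> choices1"
        using calculation by auto
      show "glue (restrict f K0) (restrict f K1) k = f k" if "k \<in> {1..2*m}" for k
        using that unfolding glue_def K1_eq by auto
    qed
    ultimately show "W \<in> ?glued ` (?G \<times> ?H)" unfolding f(2)
      by (intro image_eqI[of _ _ "(restrict f K0, restrict f K1)"]) auto
  qed
qed

lemma inj_on_image_glue: "inj_on (\<lambda>(g, h). glue g h ` {1..2*m}) (choices0 \<times> choices1)"
proof -
  have "(\<lambda>(g, h). glue g h) ` (choices0 \<times> choices1) \<subseteq> choice_functions"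
    using glue_in_choice_functions by auto
  then have "inj_on ((\<lambda>f. f ` {1..2*m}) \<circ> (\<lambda>(g, h). glue g h)) (choices0 \<times> choices1)"
    by (intro comp_inj_on inj_on_glue inj_on_subset[OF inj_on_image_choice_functions])
  then show ?thesis by (simp add: comp_def case_prod_beta')
qed

definition sign :: "(nat \<Rightarrow> nat) \<Rightarrow> real" where
  "sign f = (-1) ^ matched_pairs f"

abbreviation split_pairs :: "nat set" where
  "split_pairs \<equiv> split_indices m K0"

definition side0 :: "nat \<Rightarrow> nat" where "side0 k = (if k \<in> K0 then k else k + m)"
definition side1 :: "nat \<Rightarrow> nat" where "side1 k = (if k \<in> K0 then k + m else k)"

definition partner :: "nat \<Rightarrow> nat \<Rightarrow> nat" where
  "partner k c = (if k \<in> K0 then c - n else c + n)"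

definition other_matches :: "nat \<Rightarrow> (nat \<Rightarrow> nat) \<Rightarrow> nat" where
  "other_matches k0 f = card {k\<in>{1..m} - {k0}. f (k + m) = f k + n}"

lemma split_pair_sides:
  "k \<in> split_pairs \<Longrightarrow> side0 k \<in> K0 \<and> side1 k \<in> K1 \<and> k \<in> {1..m}"
  unfolding split_indices_def side0_def side1_def K1_eq by auto

lemma sign_split_off:
  assumes k0: "k0 \<in> {1..m}"
  shows "sign f = (if f (k0 + m) = f k0 + n then -1 else 1) * (-1) ^ other_matches k0 f"
proof -
  let ?M = "{k\<in>{1..m} - {k0}. f (k + m) = f k + n}"
  have "{k\<in>{1..m}. f (k + m) = f k + n} = (if f (k0 + m) = f k0 + n then insert k0 ?M else ?M)"
    using k0 by auto
  moreover have "finite ?M" by auto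
  ultimately show ?thesis unfolding sign_def matched_pairs_def other_matches_def by simp
qed

lemma other_matches_fun_upd:
  "j = k0 \<or> j = k0 + m \<Longrightarrow> k0 \<in> {1..m} \<Longrightarrow> other_matches k0 (f(j := a)) = other_matches k0 f"
  unfolding other_matches_def by (rule arg_cong[where f = card]) auto

lemma partner_in_Iblock:
  assumes "k \<in> split_pairs" "c \<in> Iblock n (side1 k)"
  shows "partner k c \<in> Iblock n (side0 k)"
  using assms add_n_mem_Iblock_iff[of k "c - n"] add_n_mem_Iblock_iff[of k c] Iblock_eq[of "k + m"] n_eq
  unfolding split_indices_def side0_def side1_def partner_def by (auto split: if_splits)

lemma partner_inj:
  assumes "k \<in> split_pairs" "c \<in> Iblock n (side1 k)" "c' \<in> Iblock n (side1 k)" "c \<noteq> c'"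
  shows "partner k c \<noteq> partner k c'"
  using assms Iblock_eq[of "k + m"] n_eq
  unfolding split_indices_def side1_def partner_def by (auto split: if_splits)

lemma matched_iff_partner:
  assumes "k \<in> split_pairs" "f (side1 k) \<in> Iblock n (side1 k)"
  shows "f (k + m) = f k + n \<longleftrightarrow> f (side0 k) = partner k (f (side1 k))"
  using assms Iblock_eq[of "k + m"] n_eq
  unfolding split_indices_def side0_def side1_def partner_def by (auto split: if_splits)

lemma sign_glue_fun_upd:
  assumes k0: "k0 \<in> split_pairs" and h: "h \<in> choices1"
  shows "sign ((glue g h)(side0 k0 := a)) =
    (if a = partner k0 (h (side1 k0)) then -1 else 1) * (-1) ^ other_matches k0 (glue g h)"
proof -
  let ?f = "(glue g h)(side0 k0 := a)"
  have sides: "side0 k0 \<in> K0" "side1 k0 \<in> K1" "k0 \<in> {1..m}" using split_pair_sides[OF k0] by auto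
  then have "side1 k0 \<notin> K0" "side1 k0 \<noteq> side0 k0" unfolding K1_eq by auto
  then have "?f (side1 k0) = h (side1 k0)" unfolding glue_def by simp
  moreover have "h (side1 k0) \<in> Iblock n (side1 k0)" using PiE_mem[OF h sides(2)] .
  ultimately have "?f (k0 + m) = ?f k0 + n \<longleftrightarrow> a = partner k0 (h (side1 k0))"
    using matched_iff_partner[OF k0, of ?f] by simp
  moreover have "side0 k0 = k0 \<or> side0 k0 = k0 + m" unfolding side0_def by auto
  ultimately show ?thesis
    using sign_split_off[OF sides(3), of ?f] other_matches_fun_upd[OF _ sides(3)] by simp
qed

text \<open>Fixing all coordinates of g except the one on the \<Pi>_0-side of k0, the two signs change
  exactly when that coordinate hits the partner of h, respectively of h'; over the four elements of
  the block these two flips cancel.\<close>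

lemma correlation_eq_zero:
  assumes h: "h \<in> choices1" and h': "h' \<in> choices1" and k0: "k0 \<in> split_pairs"
    and differ: "h (side1 k0) \<noteq> h' (side1 k0)"
  shows "(\<Sum>g\<in>choices0. sign (glue g h) * sign (glue g h')) = 0"
proof -
  define j where "j = side0 k0"
  have j: "j \<in> K0" "j \<in> {1..2*m}" using split_pair_sides[OF k0] K0_subset unfolding j_def by auto
  define c c' where "c = partner k0 (h (side1 k0))" and "c' = partner k0 (h' (side1 k0))"
  define flip where "flip x a = (if a = x then -1 else (1::real))" for x a :: nat
  define rest where "rest g = (-1::real) ^ other_matches k0 (glue g h) * (-1) ^ other_matches k0 (glue g h')"
    for g
  have in_block: "h (side1 k0) \<in> Iblock n (side1 k0)" "h' (side1 k0) \<in> Iblock n (side1 k0)"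
    using split_pair_sides[OF k0] PiE_mem[OF h] PiE_mem[OF h'] by auto
  define K' where "K' = K0 - {j}"
  have K0_eq: "K0 = insert j K'" and "j \<notin> K'" using j(1) unfolding K'_def by auto
  have "(\<Sum>g\<in>choices0. sign (glue g h) * sign (glue g h'))
      = (\<Sum>(a, g)\<in>Iblock n j \<times> PiE K' (Iblock n).
          sign (glue (g(j := a)) h) * sign (glue (g(j := a)) h'))"
    unfolding K0_eq PiE_insert_eq
    by (subst sum.reindex[OF inj_combinator[OF \<open>j \<notin> K'\<close>]]) (simp add: comp_def case_prod_beta')
  also have "\<dots> = (\<Sum>(a, g)\<in>Iblock n j \<times> PiE K' (Iblock n). flip c a * flip c' a * rest g)"
  proof (rule sum.cong[OF refl], clarify)
    fix a g
    show "sign (glue (g(j := a)) h) * sign (glue (g(j := a)) h') = flip c a * flip c' a * rest g"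
      unfolding glue_fun_upd[OF j(1)] unfolding j_def sign_glue_fun_upd[OF k0 h] sign_glue_fun_upd[OF k0 h']
      unfolding flip_def rest_def c_def c'_def by simp
  qed
  also have "\<dots> = (\<Sum>a\<in>Iblock n j. flip c a * flip c' a) * (\<Sum>g\<in>PiE K' (Iblock n). rest g)"
    by (simp add: sum_product sum.cartesian_product case_prod_beta')
  also have "(\<Sum>a\<in>Iblock n j. flip c a * flip c' a) = 0"
  proof -
    have "c \<in> Iblock n j" "c' \<in> Iblock n j" "c \<noteq> c'"
      unfolding c_def c'_def j_def
      using partner_in_Iblock[OF k0] partner_inj[OF k0 in_block differ] in_block by auto
    then show ?thesis
      unfolding flip_def using sum_two_sign_flips_eq_zero[OF finite_Iblock] card_Iblock[OF j(2)]
      by blast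
  qed
  finally show ?thesis by simp
qed

definition agree_on_split :: "(nat \<Rightarrow> nat) \<Rightarrow> (nat \<Rightarrow> nat) \<Rightarrow> bool" where
  "agree_on_split h h' \<longleftrightarrow> (\<forall>k\<in>split_pairs. h (side1 k) = h' (side1 k))"

lemma correlation_le:
  assumes h: "h \<in> choices1" and h': "h' \<in> choices1"
  shows "(\<Sum>g\<in>choices0. sign (glue g h) * sign (glue g h'))
    \<le> (if agree_on_split h h' then real (card choices0) else 0)"
proof (cases "agree_on_split h h'")
  case True
  have "(\<Sum>g\<in>choices0. sign (glue g h) * sign (glue g h')) \<le> (\<Sum>g\<in>choices0. 1)"
  proof (rule sum_mono)
    fix g
    have "\<bar>sign (glue g h) * sign (glue g h')\<bar> = 1" by (simp add: sign_def abs_mult)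
    then show "sign (glue g h) * sign (glue g h') \<le> 1" by linarith
  qed
  then show ?thesis using True by simp
next
  case False
  then show ?thesis using correlation_eq_zero[OF h h'] unfolding agree_on_split_def by auto
qed

lemma inj_on_side1: "inj_on side1 split_pairs"
  by (rule inj_onI) (auto simp: split_indices_def side1_def split: if_splits)

lemma card_split_pairs_le: "card split_pairs \<le> card K1"
proof -
  have "side1 ` split_pairs \<subseteq> K1" using split_pair_sides by auto
  then have "card (side1 ` split_pairs) \<le> card K1" by (rule card_mono[OF finite_K1])
  then show ?thesis by (simp add: card_image[OF inj_on_side1])
qed

text \<open>A choice h' agreeing with h on the split pairs is determined by its values on the
  remaining card K1 - card split_pairs blocks.\<close>

lemma card_agreeing_le:
  assumes h: "h \<in> choices1"
  shows "card {h'\<in>choices1. agree_on_split h h'} \<le> 4 ^ (card K1 - card split_pairs)"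
proof -
  define J where "J = side1 ` split_pairs"
  have J: "J \<subseteq> K1" "card J = card split_pairs"
    unfolding J_def using split_pair_sides card_image[OF inj_on_side1] by auto
  let ?A = "{h'\<in>choices1. agree_on_split h h'}"
  have "inj_on (\<lambda>h'. restrict h' (K1 - J)) ?A"
  proof (rule inj_onI)
    fix h1 h2 assume h1: "h1 \<in> ?A" and h2: "h2 \<in> ?A"
      and eq: "restrict h1 (K1 - J) = restrict h2 (K1 - J)"
    have "h1 i = h2 i" if "i \<in> K1" for i
    proof (cases "i \<in> J")
      case True
      then show ?thesis using h1 h2 unfolding J_def agree_on_split_def by auto
    next
      case False
      then show ?thesis using fun_cong[OF eq, of i] that by auto
    qed
    moreover have "h1 \<in> choices1" "h2 \<in> choices1" using h1 h2 by auto
    ultimately show "h1 = h2" by (intro PiE_ext) auto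
  qed
  then have "card ?A = card ((\<lambda>h'. restrict h' (K1 - J)) ` ?A)" by (simp add: card_image)
  also have "\<dots> \<le> card (PiE (K1 - J) (Iblock n))"
    using finite_K1 finite_Iblock by (intro card_mono) (auto simp: restrict_PiE_iff intro: finite_PiE)
  also have "\<dots> = 4 ^ card (K1 - J)" using K1_subset by (intro card_PiE_Iblock) auto
  also have "card (K1 - J) = card K1 - card split_pairs"
    using J finite_K1 by (simp add: card_Diff_subset finite_subset)
  finally show ?thesis .
qed

lemma sum_square_sign_sum_le:
  assumes H: "H \<subseteq> choices1"
  shows "(\<Sum>g\<in>choices0. (\<Sum>h\<in>H. sign (glue g h))\<^sup>2)
    \<le> real (card H) * 4 ^ card K0 * 4 ^ (card K1 - card split_pairs)"
proof -
  have "finite H" using finite_subset[OF H finite_choices1] .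
  have "(\<Sum>g\<in>choices0. (\<Sum>h\<in>H. sign (glue g h))\<^sup>2)
      = (\<Sum>h\<in>H. \<Sum>h'\<in>H. \<Sum>g\<in>choices0. sign (glue g h) * sign (glue g h'))"
    unfolding power2_eq_square sum_product
    by (subst sum.swap) (simp add: sum.swap[of _ choices0])
  also have "\<dots> \<le> (\<Sum>h\<in>H. \<Sum>h'\<in>H. if agree_on_split h h' then real (card choices0) else 0)"
    using H by (intro sum_mono correlation_le) auto
  also have "\<dots> = (\<Sum>h\<in>H. real (card choices0) * card {h'\<in>H. agree_on_split h h'})"
    using \<open>finite H\<close> by (simp add: sum.If_cases Int_def mult.commute)
  also have "\<dots> \<le> (\<Sum>h\<in>H. real (card choices0) * 4 ^ (card K1 - card split_pairs))"
  proof (rule sum_mono)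
    fix h assume "h \<in> H"
    have "card {h'\<in>H. agree_on_split h h'} \<le> card {h'\<in>choices1. agree_on_split h h'}"
      using H finite_choices1 by (intro card_mono) auto
    also have "\<dots> \<le> 4 ^ (card K1 - card split_pairs)"
      using card_agreeing_le \<open>h \<in> H\<close> H by auto
    finally show "real (card choices0) * card {h'\<in>H. agree_on_split h h'}
        \<le> real (card choices0) * 4 ^ (card K1 - card split_pairs)"
      by (intro mult_left_mono) (auto simp flip: of_nat_le_iff)
  qed
  finally show ?thesis using card_PiE_Iblock[OF K0_subset] by simp
qed

lemma abs_sign_sum_le:
  assumes G: "G \<subseteq> choices0" and H: "H \<subseteq> choices1"
  shows "\<bar>\<Sum>g\<in>G. \<Sum>h\<in>H. sign (glue g h)\<bar> \<le> 2 ^ (4*m - card split_pairs)"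
proof -
  let ?s = "card split_pairs"
  have card_G: "real (card G) \<le> 4 ^ card K0" and card_H: "real (card H) \<le> 4 ^ card K1"
    using card_mono[OF finite_choices0 G] card_mono[OF finite_choices1 H]
      card_PiE_Iblock[OF K0_subset] card_PiE_Iblock[OF K1_subset]
    by (simp_all flip: of_nat_le_iff)
  have "(\<Sum>g\<in>G. \<Sum>h\<in>H. sign (glue g h))\<^sup>2 \<le> (\<Sum>g\<in>G. (\<Sum>h\<in>H. sign (glue g h))\<^sup>2) * card G"
    by (rule sum_squared_le_sum_of_squares)
  also have "\<dots> \<le> (\<Sum>g\<in>choices0. (\<Sum>h\<in>H. sign (glue g h))\<^sup>2) * card G"
    using G finite_choices0 by (intro mult_right_mono sum_mono2) auto
  also have "\<dots> \<le> (real (card H) * 4 ^ card K0 * 4 ^ (card K1 - ?s)) * card G"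
    by (intro mult_right_mono sum_square_sign_sum_le[OF H]) auto
  also have "\<dots> \<le> (4 ^ card K1 * 4 ^ card K0 * 4 ^ (card K1 - ?s)) * 4 ^ card K0"
    using card_G card_H by (intro mult_mono) auto
  also have "\<dots> = (4::real) ^ (4*m - ?s)"
    using card_K0_add_card_K1 card_split_pairs_le by (simp flip: power_add)
  also have "\<dots> = (2 ^ (4*m - ?s))\<^sup>2"
    by (simp flip: power_mult power_mult_distrib add: power2_eq_square mult.commute)
  finally show ?thesis by (metis abs_le_square_iff abs_of_nonneg zero_le_numeral zero_le_power)
qed

lemma rectangle_discrepancy_le:
  assumes S: "S \<subseteq> Pow P0" and T: "T \<subseteq> Pow P1" and R: "R = {U \<union> V | U V. U \<in> S \<and> V \<in> T}"
  shows "\<bar>real (card (R \<inter> Aset n m)) - real (card (R \<inter> Bset n m))\<bar> \<le> 2 ^ (4*m - card split_pairs)"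
proof -
  define G where "G = {g\<in>choices0. g ` K0 \<in> S}"
  define H where "H = {h\<in>choices1. h ` K1 \<in> T}"
  let ?glued = "\<lambda>(g, h). glue g h ` {1..2*m}"
  have inj: "inj_on ?glued (G \<times> H)"
    by (rule inj_on_subset[OF inj_on_image_glue]) (auto simp: G_def H_def)
  have "(\<Sum>W\<in>R \<inter> Lset n m. (-1::real) ^ card {i\<in>{1..n}. i \<in> W \<and> n + i \<in> W})
      = (\<Sum>(g, h)\<in>G \<times> H. (-1) ^ card {i\<in>{1..n}. i \<in> glue g h ` {1..2*m} \<and> n + i \<in> glue g h ` {1..2*m}})"
    unfolding rectangle_Int_Lset_eq[OF S T R] G_def[symmetric] H_def[symmetric]
    by (subst sum.reindex[OF inj]) (simp add: comp_def case_prod_beta')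
  also have "\<dots> = (\<Sum>(g, h)\<in>G \<times> H. sign (glue g h))"
  proof (rule sum.cong[OF refl], clarify)
    fix g h assume "g \<in> G" "h \<in> H"
    then have "glue g h \<in> choice_functions"
      unfolding G_def H_def by (intro glue_in_choice_functions) auto
    then show "(-1::real) ^ card {i\<in>{1..n}. i \<in> glue g h ` {1..2*m} \<and> n + i \<in> glue g h ` {1..2*m}}
        = sign (glue g h)"
      unfolding sign_def card_pairs_image_choice_function[OF \<open>glue g h \<in> choice_functions\<close>] by simp
  qed
  also have "\<dots> = (\<Sum>g\<in>G. \<Sum>h\<in>H. sign (glue g h))"
    by (simp add: sum.cartesian_product)
  finally show ?thesis
    using card_Aset_minus_card_Bset[of R n m] abs_sign_sum_le[of G H]
    unfolding G_def H_def by auto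
qed

lemma card_split_pairs_ge:
  assumes ordered: "P0 = Zint n i j \<or> P1 = Zint n i j"
    and lower: "2 * real m / 3 \<le> card K0" and upper: "card K0 \<le> 4 * real m / 3"
  shows "2 * real m / 3 \<le> card split_pairs"
  using ordered
proof
  assume "P0 = Zint n i j"
  then have K0_interval: "K0 = {k\<in>{1..2*m}. Iblock n k \<subseteq> Zint n i j}" unfolding K0_def by simp
  have "z \<in> K0" if "x \<in> K0" "y \<in> K0" "x \<le> z" "z \<le> y" for x y z
    using interval_block_indices_convex[of x i j y z] that unfolding K0_interval by blast
  then show ?thesis using card_split_indices_ge[OF K0_subset _ lower upper] by blast
next
  assume "P1 = Zint n i j"
  then have K1_interval: "K1 = {k\<in>{1..2*m}. Iblock n k \<subseteq> Zint n i j}" unfolding K1_def by simp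
  have "z \<in> K1" if "x \<in> K1" "y \<in> K1" "x \<le> z" "z \<le> y" for x y z
    using interval_block_indices_convex[of x i j y z] that unfolding K1_interval by blast
  moreover have "2 * real m / 3 \<le> card K1" "card K1 \<le> 4 * real m / 3"
    using lower upper card_K0_add_card_K1 by linarith+
  ultimately have "2 * real m / 3 \<le> card (split_indices m K1)"
    using card_split_indices_ge[OF K1_subset] by blast
  then show ?thesis unfolding K1_eq split_indices_complement[OF K0_subset] .
qed

end

theorem mainTheorem15:
  fixes n m :: nat and P0 P1 :: "nat set" and R :: "nat set set"
  assumes "4 dvd n" and "m = n div 4"
    and "neat_partition n m P0 P1"
    and "ordered_partition n P0 P1"
    and "balanced_partition n P0 P1"
    and "rectangle P0 P1 R"
  shows "\<bar>real (card (R \<inter> Aset n m)) - real (card (R \<inter> Bset n m))\<bar> \<le> 2 powr (10 * real m / 3)"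
proof -
  have n: "n = 4*m" using assms(1,2) by auto
  interpret neat_split n m P0 P1
    using assms(3) n by unfold_locales (auto simp: neat_partition_def is_partition_def)
  obtain S T where "S \<subseteq> Pow P0" "T \<subseteq> Pow P1" "R = {U \<union> V | U V. U \<in> S \<and> V \<in> T}"
    using assms(6) unfolding rectangle_def by blast
  then have "\<bar>real (card (R \<inter> Aset n m)) - real (card (R \<inter> Bset n m))\<bar> \<le> 2 ^ (4*m - card split_pairs)"
    by (rule rectangle_discrepancy_le)
  also have "\<dots> = 2 powr real (4*m - card split_pairs)"
    by (simp add: powr_realpow)
  also have "\<dots> \<le> 2 powr (10 * real m / 3)"
  proof (rule powr_mono)
    obtain i j where "P0 = Zint n i j \<or> P1 = Zint n i j"
      using assms(4) unfolding ordered_partition_def by blast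
    moreover have "2 * real m / 3 \<le> card K0" "card K0 \<le> 4 * real m / 3"
      using assms(5) card_P0 n unfolding balanced_partition_def by auto
    ultimately have "2 * real m / 3 \<le> card split_pairs"
      by (rule card_split_pairs_ge)
    moreover have "card split_pairs \<le> 4*m"
      using card_split_pairs_le card_K0_add_card_K1 by linarith
    ultimately show "real (4*m - card split_pairs) \<le> 10 * real m / 3"
      by (simp add: of_nat_diff)
  qed simp
  finally show ?thesis .
qed

end
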